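(* For all integers $n \geq k \geq 1$ and $1 \leq m < n$, under any bi-partition of the input positions between Alice and Bob, $D(\operatorname{SSD}_{n,k,m}) = O(k \log n)$.
   Context: For $\Sigma = \{0,1,\dots,m\}$, $\operatorname{SSD}_{n,k,m} : \Sigma^n \times \Sigma^k \to \{0,1\}$ is $1$ iff $y$ is a subsequence of $x$ (there exist indices $i_1 < \dots < i_k$ with $x_{i_j} = y_j$). A bi-partition assigns each of the $n+k$ characters of $(x,y)$ to Alice or Bob. $D(f)$ is the minimum worst-case number of bits exchanged by a deterministic two-party protocol computing $f$. *)

theory Defs
  imports Complex_Main "HOL-Library.Sublist"
begin

text \<open>Inputs (x,y) with |x| = n, |y| = k are encoded as one list w = x @ y of length n+k;
  position i < n is x_(i+1), position n+j is y_(j+1).\<close>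

definition SSD :: "nat list \<Rightarrow> nat list \<Rightarrow> bool" where
  "SSD x y = subseq y x"

definition ssd_inputs :: "nat \<Rightarrow> nat \<Rightarrow> nat \<Rightarrow> nat list set" where
  "ssd_inputs n k m = {w. length w = n + k \<and> set w \<subseteq> {0..m}}"

definition ssd_fun :: "nat \<Rightarrow> nat list \<Rightarrow> bool" where
  "ssd_fun n w = SSD (take n w) (drop n w)"

text \<open>A node is owned by Alice (True) or Bob (False)
  and sends one bit computed from the whole input; validity demands that it depends only on
  the owner's positions.\<close>

datatype proto = Leaf bool | Node bool "nat list \<Rightarrow> bool" proto proto

fun run :: "proto \<Rightarrow> nat list \<Rightarrow> bool" where
  "run (Leaf b) w = b"
| "run (Node ow g l r) w = (if g w then run l w else run r w)"

fun depth :: "proto \<Rightarrow> nat" where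
  "depth (Leaf b) = 0"
| "depth (Node ow g l r) = Suc (max (depth l) (depth r))"

fun valid_proto :: "nat list set \<Rightarrow> nat set \<Rightarrow> nat set \<Rightarrow> proto \<Rightarrow> bool" where
  "valid_proto X A B (Leaf b) = True"
| "valid_proto X A B (Node ow g l r) =
     ((\<forall>w\<in>X. \<forall>w'\<in>X. (\<forall>i\<in>(if ow then A else B). w ! i = w' ! i) \<longrightarrow> g w = g w')
      \<and> valid_proto X A B l \<and> valid_proto X A B r)"

definition D :: "nat list set \<Rightarrow> nat set \<Rightarrow> nat set \<Rightarrow> (nat list \<Rightarrow> bool) \<Rightarrow> nat" where
  "D X A B f = (LEAST d. \<exists>p. valid_proto X A B p \<and> (\<forall>w\<in>X. run p w = f w) \<and> depth p = d)"

end

theory Submission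
  imports Defs "HOL-Library.Log_Nat"
begin

text \<open>The protocol runs the greedy embedding of y into x. In round j the owner of y_j announces
  it; then Alice announces the first position at or after the current pointer p among her
  x-positions that carries y_j, and Bob does the same among his. The smaller of the two answers
  is the first occurrence of y_j in x from p on, which is where the greedy embedding places y_j,
  and the pointer moves past it. All announced values lie in {0..n} (n meaning "no occurrence"),
  so each round costs 3 floorlog 2 n bits and the k rounds cost O(k log n).\<close>

definition determined_by :: "nat list set \<Rightarrow> nat set \<Rightarrow> (nat list \<Rightarrow> 'a) \<Rightarrow> bool" where
  "determined_by X S h \<longleftrightarrow> (\<forall>w\<in>X. \<forall>w'\<in>X. (\<forall>i\<in>S. w ! i = w' ! i) \<longrightarrow> h w = h w')"

lemma determined_by_comp: "determined_by X S h \<Longrightarrow> determined_by X S (\<lambda>w. f (h w))"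
  unfolding determined_by_def by metis

lemma valid_proto_Node_iff:
  "valid_proto X A B (Node ow g l r) \<longleftrightarrow>
     determined_by X (if ow then A else B) g \<and> valid_proto X A B l \<and> valid_proto X A B r"
  unfolding determined_by_def by simp

lemma D_le_depth:
  assumes "valid_proto X A B p" "\<forall>w\<in>X. run p w = f w"
  shows "D X A B f \<le> depth p"
  unfolding D_def using assms by (intro Least_le) blast

fun send_bits :: "bool \<Rightarrow> (nat list \<Rightarrow> nat) \<Rightarrow> nat \<Rightarrow> (nat \<Rightarrow> proto) \<Rightarrow> proto" where
  "send_bits ow h 0 P = P 0"
| "send_bits ow h (Suc b) P = Node ow (\<lambda>w. odd (h w))
     (send_bits ow (\<lambda>w. h w div 2) b (\<lambda>v. P (2 * v + 1)))
     (send_bits ow (\<lambda>w. h w div 2) b (\<lambda>v. P (2 * v)))"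

lemma run_send_bits: "h w < 2 ^ b \<Longrightarrow> run (send_bits ow h b P) w = run (P (h w)) w"
proof (induction b arbitrary: h P)
  case (Suc b)
  then have "h w div 2 < 2 ^ b" by auto
  then show ?case using Suc.IH[of "\<lambda>w. h w div 2"] by (auto simp: odd_two_times_div_two_succ)
qed simp

lemma valid_send_bits:
  assumes "determined_by X (if ow then A else B) h" "\<And>v. valid_proto X A B (P v)"
  shows "valid_proto X A B (send_bits ow h b P)"
  using assms
proof (induction b arbitrary: h P)
  case (Suc b)
  have "determined_by X (if ow then A else B) (\<lambda>w. h w div 2)"
    using Suc.prems(1) by (rule determined_by_comp)
  then have "valid_proto X A B (send_bits ow (\<lambda>w. h w div 2) b Q)"
    if "\<And>v. valid_proto X A B (Q v)" for Q
    using Suc.IH that by blast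
  moreover have "determined_by X (if ow then A else B) (\<lambda>w. odd (h w))"
    using Suc.prems(1) by (rule determined_by_comp)
  ultimately show ?case
    using Suc.prems(2) by (simp only: send_bits.simps valid_proto_Node_iff)
qed simp

lemma depth_send_bits: "(\<And>v. depth (P v) \<le> d) \<Longrightarrow> depth (send_bits ow h b P) \<le> b + d"
proof (induction b arbitrary: h P)
  case (Suc b)
  from Suc.IH[of "\<lambda>v. P (2 * v + 1)"] Suc.IH[of "\<lambda>v. P (2 * v)"] Suc.prems show ?case
    by fastforce
qed simp

definition first_occ :: "nat set \<Rightarrow> nat \<Rightarrow> nat list \<Rightarrow> nat \<Rightarrow> nat \<Rightarrow> nat" where
  "first_occ S c w p n = (LEAST i. i = n \<or> (p \<le> i \<and> i < n \<and> i \<in> S \<and> w ! i = c))"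

lemma first_occ_le: "first_occ S c w p n \<le> n"
  unfolding first_occ_def by (rule Least_le) simp

lemma first_occ_spec:
  "first_occ S c w p n = n \<or>
   (p \<le> first_occ S c w p n \<and> first_occ S c w p n < n \<and>
    first_occ S c w p n \<in> S \<and> w ! first_occ S c w p n = c)"
  unfolding first_occ_def by (rule LeastI[of _ n]) simp

lemma first_occ_least: "p \<le> i \<Longrightarrow> i < n \<Longrightarrow> i \<in> S \<Longrightarrow> w ! i = c \<Longrightarrow> first_occ S c w p n \<le> i"
  unfolding first_occ_def by (rule Least_le) simp

lemma determined_by_first_occ:
  "S \<inter> {..<n} \<subseteq> T \<Longrightarrow> determined_by X T (\<lambda>w. first_occ S c w p n)"
  unfolding determined_by_def first_occ_def
  by (intro ballI impI arg_cong[where f = Least] ext) auto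

lemma min_first_occ:
  assumes "{..<n} \<subseteq> S \<union> T"
  shows "min (first_occ S c w p n) (first_occ T c w p n) = first_occ UNIV c w p n"
proof -
  let ?i = "first_occ UNIV c w p n"
  have "?i \<le> first_occ S c w p n" "?i \<le> first_occ T c w p n"
    using first_occ_spec[of S c w p n] first_occ_spec[of T c w p n]
    by (auto intro: first_occ_least first_occ_le)
  moreover have "first_occ S c w p n \<le> ?i \<or> first_occ T c w p n \<le> ?i"
    using first_occ_spec[of UNIV c w p n] first_occ_le[of S c w p n] assms
    by (auto intro: first_occ_least)
  ultimately show ?thesis by linarith
qed

lemma subseq_Cons_iff_first_occ:
  assumes "n \<le> length w" "p \<le> n"
  shows "subseq (c # ys) (drop p (take n w)) \<longleftrightarrow>
    first_occ UNIV c w p n < n \<and> subseq ys (drop (Suc (first_occ UNIV c w p n)) (take n w))"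
  using assms
proof (induction "n - p" arbitrary: p)
  case 0
  then have "first_occ UNIV c w p n = n"
    using first_occ_spec[of UNIV c w p n] first_occ_le[of UNIV c w p n] by auto
  with 0 show ?case by simp
next
  case (Suc d)
  then have "p < n" by simp
  with Suc.prems have drop_p: "drop p (take n w) = w ! p # drop (Suc p) (take n w)"
    using Cons_nth_drop_Suc[of p "take n w"] by simp
  show ?case
  proof (cases "w ! p = c")
    case True
    with \<open>p < n\<close> have "first_occ UNIV c w p n = p"
      using first_occ_least[of p p n UNIV w c] first_occ_spec[of UNIV c w p n] by auto
    with True \<open>p < n\<close> show ?thesis by (simp add: drop_p)
  next
    case False
    then have skip: "first_occ UNIV c w p n = first_occ UNIV c w (Suc p) n"
      unfolding first_occ_def by (intro arg_cong[where f = Least] ext) (auto simp: le_less)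
    have IH: "subseq (c # ys) (drop (Suc p) (take n w)) \<longleftrightarrow>
        first_occ UNIV c w (Suc p) n < n \<and>
        subseq ys (drop (Suc (first_occ UNIV c w (Suc p) n)) (take n w))"
      using Suc \<open>p < n\<close> by (intro Suc.hyps(1)) auto
    have step: "subseq (c # ys) (drop p (take n w)) \<longleftrightarrow>
        subseq (c # ys) (drop (Suc p) (take n w))"
      unfolding drop_p using False by simp
    show ?thesis by (simp only: skip IH step)
  qed
qed

text \<open>r rounds remain: y_(k-r+1) .. y_k are still to be embedded into x from position p on.
  Every message has L bits.\<close>

primrec ssd_protocol :: "nat \<Rightarrow> nat \<Rightarrow> nat set \<Rightarrow> nat \<Rightarrow> nat \<Rightarrow> nat \<Rightarrow> proto" where
  "ssd_protocol n k A L 0 p = Leaf True"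
| "ssd_protocol n k A L (Suc r) p =
     send_bits (n + (k - Suc r) \<in> A) (\<lambda>w. w ! (n + (k - Suc r))) L (\<lambda>c.
     send_bits True (\<lambda>w. first_occ A c w p n) L (\<lambda>a.
     send_bits False (\<lambda>w. first_occ (- A) c w p n) L (\<lambda>b.
       if min a b < n then ssd_protocol n k A L r (Suc (min a b)) else Leaf False)))"

lemma depth_ssd_protocol: "depth (ssd_protocol n k A L r p) \<le> 3 * L * r"
proof (induction r arbitrary: p)
  case (Suc r)
  have "depth (ssd_protocol n k A L (Suc r) p) \<le> L + (L + (L + 3 * L * r))"
    unfolding ssd_protocol.simps by (intro depth_send_bits) (simp add: Suc.IH)
  then show ?case by simp
qed simp

lemma valid_ssd_protocol:
  assumes "A \<subseteq> {..<n + k}" "r \<le> k"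
  shows "valid_proto X A ({..<n + k} - A) (ssd_protocol n k A L r p)"
  using assms(2)
proof (induction r arbitrary: p)
  case (Suc r)
  have owner: "determined_by X (if n + (k - Suc r) \<in> A then A else {..<n + k} - A)
      (\<lambda>w. w ! (n + (k - Suc r)))"
    using Suc.prems unfolding determined_by_def by auto
  have alice: "determined_by X A (\<lambda>w. first_occ A c w p n)" for c
    by (rule determined_by_first_occ) auto
  have bob: "determined_by X ({..<n + k} - A) (\<lambda>w. first_occ (- A) c w p n)" for c
    by (rule determined_by_first_occ) auto
  have IH: "valid_proto X A ({..<n + k} - A) (ssd_protocol n k A L r q)" for q
    using Suc by simp
  show ?case
    unfolding ssd_protocol.simps
    by (intro valid_send_bits owner) (simp_all add: alice bob IH)
qed simp

lemma run_ssd_protocol: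
  assumes "length w = n + k" "set w \<subseteq> {..<2 ^ L}" "n < 2 ^ L" "r \<le> k" "p \<le> n"
  shows "run (ssd_protocol n k A L r p) w \<longleftrightarrow>
    subseq (drop (k - r) (drop n w)) (drop p (take n w))"
  using assms(4,5)
proof (induction r arbitrary: p)
  case 0
  then show ?case using assms(1) by simp
next
  case (Suc r)
  define c where "c = w ! (n + (k - Suc r))"
  let ?i = "first_occ UNIV c w p n"
  have y_split: "drop (k - Suc r) (drop n w) = c # drop (k - r) (drop n w)"
    using Cons_nth_drop_Suc[of "k - Suc r" "drop n w"] Suc.prems assms(1)
    by (simp add: c_def Suc_diff_Suc)
  have "n + (k - Suc r) < length w" using Suc.prems assms(1) by simp
  then have "c \<in> set w" unfolding c_def by (rule nth_mem)
  then have "c < 2 ^ L" using assms(2) by auto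
  moreover have "first_occ S c w p n < 2 ^ L" for S
    using first_occ_le assms(3) by (rule le_less_trans)
  moreover have "min (first_occ A c w p n) (first_occ (- A) c w p n) = ?i"
    by (rule min_first_occ) auto
  ultimately have "run (ssd_protocol n k A L (Suc r) p) w \<longleftrightarrow>
      ?i < n \<and> run (ssd_protocol n k A L r (Suc ?i)) w"
    by (simp add: run_send_bits flip: c_def)
  also have "\<dots> \<longleftrightarrow> ?i < n \<and> subseq (drop (k - r) (drop n w)) (drop (Suc ?i) (take n w))"
    using Suc.IH[of "Suc ?i"] Suc.prems by auto
  also have "\<dots> \<longleftrightarrow> subseq (drop (k - Suc r) (drop n w)) (drop p (take n w))"
    unfolding y_split using subseq_Cons_iff_first_occ[of n w p c] assms(1) Suc.prems by simp
  finally show ?case .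
qed

lemma floorlog_le_two_log: "2 \<le> n \<Longrightarrow> real (floorlog 2 n) \<le> 2 * log 2 (real n)"
proof -
  assume "2 \<le> n"
  then have log_ge_1: "1 \<le> log 2 (real n)" by simp
  then have "real (floorlog 2 n) = real_of_int \<lfloor>log 2 (real n)\<rfloor> + 1"
    using \<open>2 \<le> n\<close> by (simp add: floorlog_def)
  also have "\<dots> \<le> log 2 (real n) + 1" by simp
  finally show ?thesis using log_ge_1 by simp
qed

theorem mainTheorem10:
  shows "\<exists>C::real. \<forall>n k m A.
     1 \<le> k \<and> k \<le> n \<and> 1 \<le> m \<and> m < n \<and> A \<subseteq> {..<n+k} \<longrightarrow>
     real (D (ssd_inputs n k m) A ({..<n+k} - A) (ssd_fun n)) \<le> C * real k * log 2 (real n)"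
proof (intro exI[of _ 6] allI impI)
  fix n k m :: nat and A :: "nat set"
  assume asm: "1 \<le> k \<and> k \<le> n \<and> 1 \<le> m \<and> m < n \<and> A \<subseteq> {..<n+k}"
  define L where "L = floorlog 2 n"
  let ?p = "ssd_protocol n k A L k 0"
  have "n < 2 ^ L" using floorlog_bounds[of n 2] asm unfolding L_def by simp
  have "run ?p w = ssd_fun n w" if "w \<in> ssd_inputs n k m" for w
  proof -
    have "length w = n + k" "set w \<subseteq> {..<2 ^ L}"
      using that asm \<open>n < 2 ^ L\<close> by (auto simp: ssd_inputs_def)
    with \<open>n < 2 ^ L\<close> show ?thesis by (simp add: run_ssd_protocol ssd_fun_def SSD_def)
  qed
  then have "D (ssd_inputs n k m) A ({..<n+k} - A) (ssd_fun n) \<le> depth ?p"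
    using asm by (auto intro!: D_le_depth valid_ssd_protocol)
  also have "\<dots> \<le> 3 * L * k" by (rule depth_ssd_protocol)
  finally have "real (D (ssd_inputs n k m) A ({..<n+k} - A) (ssd_fun n)) \<le> 3 * real L * real k"
    by (metis of_nat_le_iff of_nat_mult of_nat_numeral)
  also have "\<dots> \<le> 3 * (2 * log 2 (real n)) * real k"
    using floorlog_le_two_log[of n] asm unfolding L_def by (intro mult_right_mono mult_left_mono) auto
  finally show "real (D (ssd_inputs n k m) A ({..<n+k} - A) (ssd_fun n)) \<le> 6 * real k * log 2 (real n)"
    by (simp add: algebra_simps)
qed

end
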